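(* Let $n \geq 2$ be an integer, let $p(x) \in \mathcal{T}_n$, and let $r = \deg \mathrm{Min}(p,x)$, where $1 \leq r \leq n$. Let $q(x) \in \mathcal{J}(p(x))$ and let $f(x) = q(x)/\gcd(p(x),p'(x)) \in \mathbb{Z}[x]$. Then there exist nonnegative real numbers $\gamma_1, \dots, \gamma_r$ such that \[ \mathrm{coeff}(f(x-1)) = \sum_{j=1}^r \gamma_j \cdot \mathrm{coeff}(\mathrm{Min}_j(p, x-1)). \]
   Context: A nonzero real polynomial is real-rooted if all its complex roots are real. For $n\ge1$, a Seidel trace polynomial of degree $n$ is a real-rooted polynomial $p(x)=\sum_{i=0}^n a_i x^{n-i}\in\mathbb{Z}[x]$ of degree $n$ with $a_0=1$, $a_1=0$, and $a_2=-\binom{n}{2}$ if $n\ge2$; $\mathcal{T}_n$ is the set of these. For real-rooted $p,q$ with $\deg p = m$, $\deg q = m-1$, roots $\lambda_1\le\dots\le\lambda_m$ of $p$ and $\mu_1\le\dots\le\mu_{m-1}$ of $q$, we say $q$ interlaces $p$ if $\lambda_i \le \mu_i \le \lambda_{i+1}$ for all $i$. For $p\in\mathcal{T}_n$, $\mathcal{J}(p(x))$ is the set of integer polynomials $q(x)$ of degree $n-1$ with $q\in\mathcal{T}_{n-1}$ and $q$ interlacing $p$. Here $\gcd(p(x),p'(x))$ is the monic gcd and $\mathrm{Min}(p,x) := p(x)/\gcd(p(x),p'(x))$. Writing $\mathrm{Min}(p,x) = \prod_{i=1}^r (x-\lambda_i)$ with $\lambda_1<\dots<\lambda_r$, define $\mathrm{Min}_j(p,x)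 := \prod_{1\le i\le r,\, i\ne j}(x-\lambda_i)$ for $j\in\{1,\dots,r\}$, and $\mathrm{Min}_j(p,x-1)$ is obtained by substituting $x-1$ for $x$. For a nonzero polynomial $g(x)$ of degree $m$, $\mathrm{coeff}(g)\in\mathbb{R}^{m+1}$ is its coefficient vector, whose $i$th entry is the coefficient of $x^{m-i+1}$ in $g(x)$. *)

theory Defs
  imports "HOL-Computational_Algebra.Computational_Algebra" "HOL-Computational_Algebra.Field_as_Ring"
begin

definition real_rooted :: "real poly \<Rightarrow> bool" where
  "real_rooted p \<longleftrightarrow> p \<noteq> 0 \<and>
     (\<forall>z::complex. poly (map_poly complex_of_real p) z = 0 \<longrightarrow> z \<in> \<real>)"

definition rpoly :: "int poly \<Rightarrow> real poly" where
  "rpoly p = map_poly real_of_int p"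

text \<open>Seidel trace polynomials of degree n; a_i is the coefficient of x^(n-i).\<close>
definition seidel_trace :: "nat \<Rightarrow> int poly \<Rightarrow> bool" where
  "seidel_trace n p \<longleftrightarrow> n \<ge> 1 \<and> real_rooted (rpoly p) \<and> degree p = n \<and>
     coeff p n = 1 \<and> coeff p (n - 1) = 0 \<and>
     (n \<ge> 2 \<longrightarrow> coeff p (n - 2) = - int (n choose 2))"

definition sorted_roots :: "real poly \<Rightarrow> real list" where
  "sorted_roots p = (THE xs. sorted xs \<and>
     p = smult (lead_coeff p) (prod_list (map (\<lambda>a. [:-a, 1:]) xs)))"

definition interlaces :: "real poly \<Rightarrow> real poly \<Rightarrow> bool" where
  "interlaces q p \<longleftrightarrow> real_rooted p \<and> real_rooted q \<and> degree p \<ge> 1 \<and>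
     degree q = degree p - 1 \<and>
     (\<forall>i < degree p - 1. sorted_roots p ! i \<le> sorted_roots q ! i \<and>
                         sorted_roots q ! i \<le> sorted_roots p ! (i + 1))"

definition J_set :: "nat \<Rightarrow> int poly \<Rightarrow> int poly set" where
  "J_set n p = {q. degree q = n - 1 \<and> seidel_trace (n - 1) q \<and> interlaces (rpoly q) (rpoly p)}"

text \<open>Monic gcd (gcd over the field of reals is normalized to be monic).\<close>
definition gcdp :: "real poly \<Rightarrow> real poly" where
  "gcdp p = gcd p (pderiv p)"

definition Minp :: "real poly \<Rightarrow> real poly" where
  "Minp p = p div gcdp p"

definition Min_roots :: "real poly \<Rightarrow> real list" where
  "Min_roots p = sorted_list_of_set {x. poly (Minp p) x = 0}"

definition Minj :: "real poly \<Rightarrow> nat \<Rightarrow> real poly" where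
  "Minj p j = (\<Prod>i\<in>{1..length (Min_roots p)} - {j}. [:- (Min_roots p ! (i - 1)), 1:])"

definition shift1 :: "real poly \<Rightarrow> real poly" where
  "shift1 g = pcompose g [:-1, 1:]"

text \<open>coeff(g): the i-th entry (1-indexed) is the coefficient of x^(m-i+1).\<close>
definition coeff_vec :: "real poly \<Rightarrow> real list" where
  "coeff_vec g = rev (coeffs g)"

end

theory Submission
  imports Defs "Berlekamp_Zassenhaus.Factor_Bound"
begin

text \<open>If Q interlaces P, every root of P of multiplicity m is a
root of Q of multiplicity at least m - 1, so gcd(P, P') divides Q and f = Q / gcd(P, P') is a
monic polynomial of degree r - 1; it has integer coefficients because gcd(P, P') is a monic
integer polynomial. Lagrange interpolation at the r distinct roots l_1 < ... < l_r of Min(P)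
gives f = f(l_1) / Min_1(l_1) Min_1 + ... + f(l_r) / Min_r(l_r) Min_r, and interlacing implies
that P and Q have equally many roots to the right of any l_j that is not a root of f; hence
f(l_j) and Min_j(l_j) have the same sign. Substituting x - 1 is linear, so the expansion passes
to coefficient vectors.\<close>

section \<open>Monic polynomials with prescribed roots\<close>

definition poly_of_roots :: "'a::comm_ring_1 multiset \<Rightarrow> 'a poly" where
  "poly_of_roots X = (\<Prod>x\<in>#X. [:-x, 1:])"

lemma poly_of_roots_empty [simp]: "poly_of_roots {#} = 1"
  by (simp add: poly_of_roots_def)

lemma poly_of_roots_add_mset [simp]:
  "poly_of_roots (add_mset a X) = [:-a, 1:] * poly_of_roots X"
  by (simp add: poly_of_roots_def)

lemma poly_of_roots_union: "poly_of_roots (X + Y) = poly_of_roots X * poly_of_roots Y"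
  by (simp add: poly_of_roots_def)

lemma prod_list_linear_factors: "(\<Prod>a\<leftarrow>xs. [:-a, 1:]) = poly_of_roots (mset xs)"
  by (induction xs) auto

lemma poly_of_roots_nonzero [simp]: "poly_of_roots X \<noteq> (0 :: 'a::idom poly)"
  by (induction X) (auto simp del: mult_pCons_left)

lemma lead_coeff_poly_of_roots [simp]: "lead_coeff (poly_of_roots X :: 'a::idom poly) = 1"
  by (induction X) (auto simp del: mult_pCons_left simp: lead_coeff_mult)

lemma degree_poly_of_roots [simp]: "degree (poly_of_roots X :: 'a::idom poly) = size X"
  by (induction X) (auto simp del: mult_pCons_left simp: degree_mult_eq)

lemma order_poly_of_roots: "Polynomial.order a (poly_of_roots X :: 'a::idom poly) = count X a"
proof (induction X)
  case (add x X)
  have "Polynomial.order a (poly_of_roots (add_mset x X))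
      = Polynomial.order a [:-x, 1:] + Polynomial.order a (poly_of_roots X)"
    unfolding poly_of_roots_add_mset by (rule order_mult) (simp del: mult_pCons_left)
  also have "\<dots> = count (add_mset x X) a"
    using add order_linear'[of a "-x"] by auto
  finally show ?case .
qed simp

lemma poly_of_roots_inject [simp]:
  "poly_of_roots X = (poly_of_roots Y :: 'a::idom poly) \<longleftrightarrow> X = Y"
  by (metis multiset_eqI order_poly_of_roots)

lemma poly_of_roots_eq_0_iff: "poly (poly_of_roots X :: 'a::idom poly) t = 0 \<longleftrightarrow> t \<in># X"
  by (simp add: order_root order_poly_of_roots)

lemma poly_of_roots_dvd: "X \<subseteq># Y \<Longrightarrow> poly_of_roots X dvd poly_of_roots Y"
  by (metis poly_of_roots_union subset_mset.add_diff_inverse dvd_triv_left)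

lemma poly_of_roots_div:
  assumes "X \<subseteq># Y"
  shows "poly_of_roots Y div poly_of_roots X = (poly_of_roots (Y - X) :: 'a::field poly)"
  by (metis assms poly_of_roots_nonzero poly_of_roots_union subset_mset.add_diff_inverse
      nonzero_mult_div_cancel_left)

lemma sign_poly_of_roots_nonneg:
  fixes t :: "'a::linordered_idom"
  shows "0 \<le> (-1) ^ size {#x\<in>#X. t < x#} * poly (poly_of_roots X) t"
proof (induction X)
  case (add x X)
  let ?s = "(-1) ^ size {#y\<in>#X. t < y#} * poly (poly_of_roots X) t"
  have "(-1) ^ size {#y\<in>#add_mset x X. t < y#} * poly (poly_of_roots (add_mset x X)) t
      = \<bar>t - x\<bar> * ?s"
    by (cases "t < x") (simp_all add: algebra_simps)
  then show ?case
    using add by simp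
qed simp

lemma poly_of_roots_mult_nonneg:
  fixes t :: "'a::linordered_idom"
  assumes "size {#x\<in>#X. t < x#} = size {#x\<in>#Y. t < x#}"
  shows "0 \<le> poly (poly_of_roots X) t * poly (poly_of_roots Y) t"
proof -
  let ?e = "(-1 :: 'a) ^ size {#x\<in>#X. t < x#}"
  have "0 \<le> (?e * poly (poly_of_roots X) t) * (?e * poly (poly_of_roots Y) t)"
    using sign_poly_of_roots_nonneg[of t X] sign_poly_of_roots_nonneg[of t Y] assms
    by simp
  also have "\<dots> = (?e * ?e) * (poly (poly_of_roots X) t * poly (poly_of_roots Y) t)"
    by (simp only: ac_simps)
  also have "?e * ?e = 1"
    by (simp flip: power_mult_distrib)
  finally show ?thesis
    by simp
qed

interpretation complex_of_real_poly_hom: map_poly_idom_hom complex_of_real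
  by unfold_locales

lemma real_rooted_dvd:
  assumes "real_rooted p" "d dvd p"
  shows "real_rooted d"
proof -
  obtain e where "p = d * e"
    using assms(2) by (elim dvdE)
  then show ?thesis
    using assms(1) by (auto simp: real_rooted_def complex_of_real_poly_hom.hom_mult)
qed

lemma real_rooted_poly_of_roots: "real_rooted (poly_of_roots X)"
proof -
  have "map_poly complex_of_real (poly_of_roots X) = poly_of_roots (image_mset complex_of_real X)"
    by (induction X) (simp_all del: mult_pCons_left add: complex_of_real_poly_hom.hom_mult)
  then show ?thesis
    by (auto simp: real_rooted_def poly_of_roots_eq_0_iff)
qed

lemma real_rooted_factorization:
  assumes "real_rooted p"
  shows "\<exists>X. p = Polynomial.smult (lead_coeff p) (poly_of_roots X)"
  using assms
proof (induction "degree p" arbitrary: p)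
  case 0
  then show ?case
    by (intro exI[of _ "{#}"]) (auto elim!: degree_eq_zeroE)
next
  case (Suc k p)
  have "\<not> constant (poly (map_poly complex_of_real p))"
    using Suc.hyps(2) by (simp add: constant_degree)
  then obtain z where z: "poly (map_poly complex_of_real p) z = 0"
    using fundamental_theorem_of_algebra by blast
  with Suc.prems obtain a where "z = of_real a"
    unfolding real_rooted_def by (auto elim: Reals_cases)
  with z have "[:-a, 1:] dvd p"
    by (simp add: poly_eq_0_iff_dvd of_real_hom.poly_map_poly)
  then obtain q where pq: "p = [:-a, 1:] * q"
    by (elim dvdE)
  have "p \<noteq> 0"
    using Suc.prems by (simp add: real_rooted_def)
  then have "q \<noteq> 0"
    using pq by (metis mult_zero_right)
  then have "degree p = Suc (degree q)"
    unfolding pq by (subst degree_mult_eq) auto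
  with Suc.hyps(2) have "k = degree q"
    by simp
  moreover have "real_rooted q"
    using Suc.prems by (rule real_rooted_dvd) (simp only: pq dvd_triv_right)
  ultimately obtain Y where "q = Polynomial.smult (lead_coeff q) (poly_of_roots Y)"
    using Suc.hyps(1) by blast
  moreover have "lead_coeff p = lead_coeff q"
    unfolding pq lead_coeff_mult by simp
  ultimately have "p = Polynomial.smult (lead_coeff p) (poly_of_roots (add_mset a Y))"
    using pq by (metis poly_of_roots_add_mset mult_smult_right)
  then show ?case ..
qed

lemma monic_real_rooted_poly_of_roots:
  assumes "real_rooted p" "lead_coeff p = 1"
  obtains X where "p = poly_of_roots X"
  using real_rooted_factorization[OF assms(1)] assms(2) by auto

lemma sorted_roots_poly_of_roots: "sorted_roots (poly_of_roots X) = sorted_list_of_multiset X"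
  unfolding sorted_roots_def
proof (rule the_equality)
  fix xs
  assume "sorted xs \<and> poly_of_roots X
    = Polynomial.smult (lead_coeff (poly_of_roots X)) (\<Prod>a\<leftarrow>xs. [:-a, 1:])"
  then have "sorted xs" "X = mset xs"
    by (simp_all only: lead_coeff_poly_of_roots smult_1_left prod_list_linear_factors
        poly_of_roots_inject)
  then show "xs = sorted_list_of_multiset X"
    by (metis sorted_list_of_multiset_mset sorted_sort_id)
qed (simp only: lead_coeff_poly_of_roots smult_1_left prod_list_linear_factors
    mset_sorted_list_of_multiset sorted_sorted_list_of_multiset simp_thms)

section \<open>Square-free part\<close>

lemma order_div_gcd_pderiv:
  fixes p :: "'a::{field_char_0,field_gcd} poly"
  assumes "pderiv p \<noteq> 0"
  shows "Polynomial.order a (p div gcd p (pderiv p)) = (if Polynomial.order a p = 0 then 0 else 1)"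
proof (rule poly_squarefree_decomp_order[OF assms])
  show "p = p div gcd p (pderiv p) * gcd p (pderiv p)"
    by simp
  show "pderiv p = pderiv p div gcd p (pderiv p) * gcd p (pderiv p)"
    by simp
  show "gcd p (pderiv p) = fst (bezout_coefficients p (pderiv p)) * p
      + snd (bezout_coefficients p (pderiv p)) * pderiv p"
    by (simp add: bezout_coefficients_fst_snd)
qed

lemma gcd_pderiv_poly_of_roots:
  fixes A :: "real multiset"
  shows "gcd (poly_of_roots A) (pderiv (poly_of_roots A))
      = poly_of_roots (A - mset_set (set_mset A))"
    and "poly_of_roots A div gcd (poly_of_roots A) (pderiv (poly_of_roots A))
      = poly_of_roots (mset_set (set_mset A))"
proof -
  define P where "P = poly_of_roots A"
  define D where "D = gcd P (pderiv P)"
  have PD: "P = P div D * D"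
    by (simp add: D_def)
  have "real_rooted D" "real_rooted (P div D)"
    using real_rooted_poly_of_roots[of A] PD unfolding P_def[symmetric]
    by (metis dvd_triv_left dvd_triv_right real_rooted_dvd)+
  moreover have "lead_coeff D = 1"
    by (simp add: D_def P_def poly_gcd_monic)
  moreover from this have "lead_coeff (P div D) = 1"
    using PD by (metis P_def lead_coeff_mult lead_coeff_poly_of_roots mult_1_right)
  ultimately obtain G K where G: "D = poly_of_roots G" and K: "P div D = poly_of_roots K"
    by (metis monic_real_rooted_poly_of_roots)
  have A: "A = K + G"
    using PD[unfolded K, unfolded G] by (simp add: P_def flip: poly_of_roots_union)
  have "K = mset_set (set_mset A)"
  proof (cases "A = {#}")
    case False
    then have "pderiv P \<noteq> 0"
      by (simp add: P_def pderiv_eq_0_iff)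
    have "Polynomial.order a (P div D) = (if count A a = 0 then 0 else 1)" for a
      using order_div_gcd_pderiv[OF \<open>pderiv P \<noteq> 0\<close>, of a] unfolding D_def
      by (simp add: P_def order_poly_of_roots)
    then show ?thesis
      by (intro multiset_eqI) (auto simp: K order_poly_of_roots count_mset_set not_in_iff)
  qed (use A in simp)
  moreover have "G = A - K"
    using A by simp
  ultimately show "gcd (poly_of_roots A) (pderiv (poly_of_roots A))
      = poly_of_roots (A - mset_set (set_mset A))"
    and "poly_of_roots A div gcd (poly_of_roots A) (pderiv (poly_of_roots A))
      = poly_of_roots (mset_set (set_mset A))"
    using G K by (simp_all add: D_def P_def)
qed

lemma gcdp_poly_of_roots: "gcdp (poly_of_roots A) = poly_of_roots (A - mset_set (set_mset A))"
  unfolding gcdp_def by (rule gcd_pderiv_poly_of_roots(1))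

lemma Minp_poly_of_roots: "Minp (poly_of_roots A) = poly_of_roots (mset_set (set_mset A))"
  unfolding Minp_def gcdp_def by (rule gcd_pderiv_poly_of_roots(2))

lemma Min_roots_poly_of_roots: "Min_roots (poly_of_roots A) = sorted_list_of_set (set_mset A)"
  unfolding Min_roots_def Minp_poly_of_roots poly_of_roots_eq_0_iff by simp

lemma Minj_nonzero:
  "j \<in> {1..length (Min_roots p)} \<Longrightarrow> Minj p j \<noteq> 0"
  unfolding Minj_def by simp

lemma degree_Minj:
  "j \<in> {1..length (Min_roots p)} \<Longrightarrow> degree (Minj p j) = length (Min_roots p) - 1"
  unfolding Minj_def by (simp add: degree_prod_sum_eq)

lemma bij_betw_nth_pred:
  assumes "distinct xs"
  shows "bij_betw (\<lambda>i. xs ! (i - 1)) {1..length xs} (set xs)"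
proof -
  have "bij_betw (\<lambda>i. i - 1) {1..length xs} {..<length xs}"
    by (rule bij_betwI[where g = Suc]) auto
  from bij_betw_trans[OF this bij_betw_nth[OF assms refl refl]] show ?thesis
    by (simp add: comp_def)
qed

lemma Minj_poly_of_roots:
  fixes A :: "real multiset"
  defines "xs \<equiv> sorted_list_of_set (set_mset A)"
  assumes j: "j \<in> {1..length xs}"
  shows "Minj (poly_of_roots A) j = poly_of_roots (mset_set (set_mset A - {xs ! (j - 1)}))"
proof -
  have bij: "bij_betw (\<lambda>i. xs ! (i - 1)) {1..length xs} (set_mset A)"
    using bij_betw_nth_pred[of xs] by (simp add: xs_def)
  have "Minj (poly_of_roots A) j = (\<Prod>i\<in>{1..length xs} - {j}. [:- (xs ! (i - 1)), 1:])"
    by (simp add: Minj_def Min_roots_poly_of_roots xs_def)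
  also have "\<dots> = (\<Prod>x\<in>(\<lambda>i. xs ! (i - 1)) ` ({1..length xs} - {j}). [:-x, 1:])"
    using bij by (subst prod.reindex) (auto intro: inj_on_subset simp: bij_betw_def)
  also have "(\<lambda>i. xs ! (i - 1)) ` ({1..length xs} - {j}) = set_mset A - {xs ! (j - 1)}"
    using inj_on_image_set_diff[of "\<lambda>i. xs ! (i - 1)" "{1..length xs}" "{1..length xs}" "{j}"]
      bij j
    by (simp add: bij_betw_def)
  finally show ?thesis
    by (simp add: poly_of_roots_def prod_unfold_prod_mset)
qed

section \<open>Interlacing in terms of root counts\<close>

definition interlacing :: "'a::linorder multiset \<Rightarrow> 'a multiset \<Rightarrow> bool" where
  "interlacing B A \<longleftrightarrow> size A = Suc (size B) \<and>
     (\<forall>D. (\<forall>x y. x \<le> y \<longrightarrow> D y \<longrightarrow> D x) \<longrightarrow>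
        size (filter_mset D B) \<le> size (filter_mset D A) \<and>
        size (filter_mset D A) \<le> Suc (size (filter_mset D B)))"

lemma interlacing_sorted_lists:
  fixes as bs :: "'a::linorder list"
  assumes len: "length as = Suc (length bs)"
    and il: "\<forall>i<length bs. as ! i \<le> bs ! i \<and> bs ! i \<le> as ! Suc i"
  shows "interlacing (mset bs) (mset as)"
proof -
  have size_filter: "size (filter_mset D (mset xs)) = card {i. i < length xs \<and> D (xs ! i)}"
    for D and xs :: "'a list"
    by (metis mset_filter size_mset length_filter_conv_card)
  have "size (filter_mset D (mset bs)) \<le> size (filter_mset D (mset as)) \<and>
        size (filter_mset D (mset as)) \<le> Suc (size (filter_mset D (mset bs)))"
    if down: "\<And>x y. x \<le> y \<Longrightarrow> D y \<Longrightarrow> D x" for D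
  proof -
    let ?I = "{i. i < length bs \<and> D (bs ! i)}" and ?J = "{i. i < length as \<and> D (as ! i)}"
    have "?J \<subseteq> insert 0 (Suc ` ?I)"
    proof
      fix i
      assume "i \<in> ?J"
      then show "i \<in> insert 0 (Suc ` ?I)"
        using il down len by (cases i) auto
    qed
    then have "card ?J \<le> card (insert 0 (Suc ` ?I))"
      by (intro card_mono) auto
    also have "\<dots> \<le> Suc (card (Suc ` ?I))"
      by (simp add: card_insert_if)
    also have "Suc (card (Suc ` ?I)) = Suc (card ?I)"
      by (simp add: card_image)
    finally have "card ?J \<le> Suc (card ?I)" .
    moreover have "card ?I \<le> card ?J"
      using il down len by (intro card_mono) fastforce+
    ultimately show ?thesis
      unfolding size_filter by simp
  qed
  then show ?thesis
    using len by (simp add: interlacing_def)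
qed

lemma interlaces_imp_interlacing:
  assumes "interlaces (poly_of_roots B) (poly_of_roots A)"
  shows "interlacing B A"
proof -
  have "size A = Suc (size B)"
    and "\<forall>i < size B. sorted_list_of_multiset A ! i \<le> sorted_list_of_multiset B ! i \<and>
                   sorted_list_of_multiset B ! i \<le> sorted_list_of_multiset A ! Suc i"
    using assms by (auto simp: interlaces_def sorted_roots_poly_of_roots)
  moreover have "length (sorted_list_of_multiset X) = size X" for X :: "real multiset"
    by (metis mset_sorted_list_of_multiset size_mset)
  ultimately show ?thesis
    using interlacing_sorted_lists[of "sorted_list_of_multiset A" "sorted_list_of_multiset B"]
    by simp
qed

lemma size_filter_le_eq:
  fixes t :: "'a::linorder"
  shows "size {#x\<in>#X. x \<le> t#} = size {#x\<in>#X. x < t#} + count X t"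
proof -
  have "{#x\<in>#X. x \<le> t#} = {#x\<in>#X. x < t#} + {#x\<in>#X. x = t#}"
    by (rule multiset_eqI) auto
  then show ?thesis
    by (simp add: filter_eq_replicate_mset)
qed

lemma interlacing_size_filter:
  assumes "interlacing B A"
  shows "size {#x\<in>#B. x \<le> t#} \<le> size {#x\<in>#A. x \<le> t#}"
    and "size {#x\<in>#A. x \<le> t#} \<le> Suc (size {#x\<in>#B. x \<le> t#})"
    and "size {#x\<in>#B. x < t#} \<le> size {#x\<in>#A. x < t#}"
proof -
  have down: "size (filter_mset D B) \<le> size (filter_mset D A) \<and>
      size (filter_mset D A) \<le> Suc (size (filter_mset D B))"
    if "\<And>x y. x \<le> y \<Longrightarrow> D y \<Longrightarrow> D x" for D
    using assms that unfolding interlacing_def by blast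
  show "size {#x\<in>#B. x \<le> t#} \<le> size {#x\<in>#A. x \<le> t#}"
    and "size {#x\<in>#A. x \<le> t#} \<le> Suc (size {#x\<in>#B. x \<le> t#})"
    using down[of "\<lambda>x. x \<le> t"] by auto
  show "size {#x\<in>#B. x < t#} \<le> size {#x\<in>#A. x < t#}"
    using down[of "\<lambda>x. x < t"] by auto
qed

lemma interlacing_count_le: "interlacing B A \<Longrightarrow> count A t \<le> Suc (count B t)"
  using interlacing_size_filter[of B A t] size_filter_le_eq[of t A] size_filter_le_eq[of t B]
  by linarith

lemma interlacing_size_greater_eq:
  assumes il: "interlacing B A" and "count B t < count A t"
  shows "size {#x\<in>#A. t < x#} = size {#x\<in>#B. t < x#}"
proof -
  have split: "size X = size {#x\<in>#X. t < x#} + size {#x\<in>#X. x \<le> t#}" for X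
  proof -
    have "X = {#x\<in>#X. t < x#} + {#x\<in>#X. x \<le> t#}"
      by (rule multiset_eqI) auto
    then show ?thesis
      by (metis size_union)
  qed
  have "size {#x\<in>#A. x \<le> t#} = Suc (size {#x\<in>#B. x \<le> t#})"
    using interlacing_size_filter[OF il, of t] size_filter_le_eq[of t A] size_filter_le_eq[of t B]
      assms(2) by linarith
  moreover have "size A = Suc (size B)"
    using il by (simp add: interlacing_def)
  ultimately show ?thesis
    using split[of A] split[of B] by linarith
qed

lemma interlacing_repeated_roots_subset:
  assumes "interlacing B A"
  shows "A - mset_set (set_mset A) \<subseteq># B"
proof (rule mset_subset_eqI)
  fix a
  show "count (A - mset_set (set_mset A)) a \<le> count B a"
    using interlacing_count_le[OF assms, of a]
    by (cases "a \<in># A") (auto simp: count_mset_set not_in_iff)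
qed

section \<open>Expansion of the quotient in the basis Min_j\<close>

lemma interlacing_div_gcdp:
  fixes A B :: "real multiset"
  assumes il: "interlacing B A"
  shows "poly_of_roots B div gcdp (poly_of_roots A)
      = poly_of_roots (B - (A - mset_set (set_mset A)))"
    and "size (B - (A - mset_set (set_mset A))) = card (set_mset A) - 1"
    and "1 \<le> card (set_mset A)" and "card (set_mset A) \<le> size A"
proof -
  let ?K = "mset_set (set_mset A)"
  have GB: "A - ?K \<subseteq># B"
    by (rule interlacing_repeated_roots_subset[OF il])
  then show "poly_of_roots B div gcdp (poly_of_roots A) = poly_of_roots (B - (A - ?K))"
    by (simp add: gcdp_poly_of_roots poly_of_roots_div)
  have KA: "?K \<subseteq># A"
    by (rule mset_set_set_mset_msubset)
  have sizes: "size A = Suc (size B)" "size ?K = card (set_mset A)"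
    using il by (simp_all add: interlacing_def)
  show "card (set_mset A) \<le> size A"
    using size_mset_mono[OF KA] sizes by simp
  show "1 \<le> card (set_mset A)"
    using sizes(1) by (auto simp: Suc_le_eq card_gt_0_iff)
  show "size (B - (A - ?K)) = card (set_mset A) - 1"
    using size_Diff_submset[OF GB] size_Diff_submset[OF KA] size_mset_mono[OF GB]
      size_mset_mono[OF KA] sizes by linarith
qed

lemma interlacing_quotient_sign:
  fixes A B :: "real multiset"
  assumes il: "interlacing B A" and t: "t \<in># A"
  defines "R \<equiv> B - (A - mset_set (set_mset A))"
  shows "0 \<le> poly (poly_of_roots R) t * poly (poly_of_roots (mset_set (set_mset A - {t}))) t"
proof (cases "t \<in># R")
  case True
  then have "poly (poly_of_roots R) t = 0"
    by (simp add: poly_of_roots_eq_0_iff)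
  then show ?thesis
    by simp
next
  case False
  let ?K = "mset_set (set_mset A)"
  define U where "U X = size {#x\<in>#X. t < x#}" for X :: "real multiset"
  have GB: "A - ?K \<subseteq># B"
    by (rule interlacing_repeated_roots_subset[OF il])
  have KA: "?K \<subseteq># A"
    by (rule mset_set_set_mset_msubset)
  have "count B t = count (A - ?K) t"
    using False mset_subset_eq_count[OF GB, of t] by (simp add: R_def not_in_iff)
  also have "\<dots> < count A t"
    using t by (simp add: count_mset_set)
  finally have "U A = U B"
    unfolding U_def by (rule interlacing_size_greater_eq[OF il])
  moreover have "U A = U ?K + U (A - ?K)" "U B = U (A - ?K) + U R"
    using subset_mset.add_diff_inverse[OF KA] subset_mset.add_diff_inverse[OF GB]
    by (metis U_def filter_union_mset size_union R_def)+
  moreover have "{x \<in> set_mset A - {t}. t < x} = {x \<in> set_mset A. t < x}"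
    by auto
  then have "U (mset_set (set_mset A - {t})) = U ?K"
    by (simp add: U_def filter_mset_mset_set)
  ultimately have "U R = U (mset_set (set_mset A - {t}))"
    by linarith
  then show ?thesis
    unfolding U_def by (rule poly_of_roots_mult_nonneg)
qed

lemma lagrange_basis_expansion:
  fixes x :: "'i \<Rightarrow> 'a::field" and f :: "'a poly"
  assumes I: "finite I" and inj: "inj_on x I" and deg: "degree f < card I"
  defines "L j \<equiv> \<Prod>i\<in>I - {j}. [:-x i, 1:]"
  shows "f = (\<Sum>j\<in>I. Polynomial.smult (poly f (x j) / poly (L j) (x j)) (L j))" (is "_ = ?S")
proof (rule poly_eqI_degree[of "x ` I"])
  fix t
  assume "t \<in> x ` I"
  then obtain k where k: "k \<in> I" "t = x k"
    by blast
  have "poly (L j) (x k) = 0" if "j \<in> I" "j \<noteq> k" for j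
    using I k that by (auto simp: L_def poly_prod)
  then have "(\<Sum>j\<in>I. poly f (x j) / poly (L j) (x j) * poly (L j) (x k))
      = (\<Sum>j\<in>I. if j = k then poly f (x k) / poly (L k) (x k) * poly (L k) (x k) else 0)"
    by (intro sum.cong) auto
  moreover have "poly (L k) (x k) \<noteq> 0"
    using I k inj by (auto simp: L_def poly_prod inj_on_eq_iff)
  ultimately show "poly f t = poly ?S t"
    using I k by (simp add: poly_sum)
next
  show "degree f < card (x ` I)"
    using deg card_image[OF inj] by simp
  have "degree (L j) \<le> card I - 1" if "j \<in> I" for j
    using degree_prod_sum_le[of "I - {j}" "\<lambda>i. [:-x i, 1:]"] I that by (simp add: L_def o_def)
  then have "degree ?S \<le> card I - 1"
    using I by (intro degree_sum_le) (auto intro: order.trans[OF degree_smult_le])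
  then show "degree ?S < card (x ` I)"
    using deg card_image[OF inj] by linarith
qed

lemma interlacing_Minj_expansion:
  fixes A B :: "real multiset"
  assumes il: "interlacing B A"
  defines "r \<equiv> card (set_mset A)"
  shows "\<exists>\<gamma>. (\<forall>j\<in>{1..r}. 0 \<le> \<gamma> j) \<and>
    poly_of_roots B div gcdp (poly_of_roots A)
      = (\<Sum>j=1..r. Polynomial.smult (\<gamma> j) (Minj (poly_of_roots A) j))"
proof -
  define P where "P = poly_of_roots A"
  define f where "f = poly_of_roots B div gcdp P"
  define xs where "xs = sorted_list_of_set (set_mset A)"
  define \<gamma> where "\<gamma> j = poly f (xs ! (j - 1)) / poly (Minj P j) (xs ! (j - 1))" for j
  have len: "length xs = r"
    by (simp add: xs_def r_def)
  have bij: "bij_betw (\<lambda>i. xs ! (i - 1)) {1..r} (set_mset A)"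
    using bij_betw_nth_pred[of xs] by (simp add: xs_def r_def)
  have Minj: "Minj P j = (\<Prod>i\<in>{1..r} - {j}. [:-(xs ! (i - 1)), 1:])" for j
    by (simp add: Minj_def P_def Min_roots_poly_of_roots xs_def r_def)
  have "degree f < card {1..r}"
    using interlacing_div_gcdp[OF il] by (simp add: f_def P_def r_def)
  from lagrange_basis_expansion[OF _ _ this, of "\<lambda>i. xs ! (i - 1)"] bij
  have "f = (\<Sum>j=1..r. Polynomial.smult (\<gamma> j) (Minj P j))"
    by (simp add: Minj \<gamma>_def bij_betw_def)
  moreover have "0 \<le> \<gamma> j" if j: "j \<in> {1..r}" for j
  proof -
    have "xs ! (j - 1) \<in># A"
      using bij j by (auto simp: bij_betw_def)
    from interlacing_quotient_sign[OF il this]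
    have "0 \<le> poly f (xs ! (j - 1)) * poly (Minj P j) (xs ! (j - 1))"
      using j len interlacing_div_gcdp(1)[OF il]
      by (simp add: Minj_poly_of_roots f_def P_def xs_def)
    then show ?thesis
      unfolding \<gamma>_def by (simp add: zero_le_divide_iff zero_le_mult_iff)
  qed
  ultimately show ?thesis
    unfolding f_def P_def by blast
qed

section \<open>Integrality\<close>

interpretation of_rat_poly_hom: field_hom' "of_rat :: rat \<Rightarrow> real"
  by unfold_locales auto

lemma rpoly_of_rat_of_int: "map_poly of_rat (map_poly rat_of_int p) = rpoly p"
  unfolding rpoly_def by (subst map_poly_map_poly) (auto simp: o_def)

lemma gcdp_rpoly_monic:
  fixes p :: "int poly"
  assumes "lead_coeff p = 1"
  obtains g where "gcdp (rpoly p) = rpoly g"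
proof -
  define g where "g = gcd p (pderiv p)"
  obtain h where "p = g * h"
    unfolding g_def by (metis dvd_def gcd_dvd1)
  then have "lead_coeff g * lead_coeff h = 1"
    using assms by (metis lead_coeff_mult)
  then have lc: "lead_coeff g = 1 \<or> lead_coeff g = -1"
    using zmult_eq_1_iff by blast
  have "gcd (map_poly rat_of_int p) (map_poly rat_of_int (pderiv p))
      = Polynomial.smult (inverse (of_int (lead_coeff g))) (map_poly rat_of_int g)"
    unfolding g_def by (rule gcd_rat_to_gcd_int)
  then have "gcd (rpoly p) (rpoly (pderiv p))
      = Polynomial.smult (inverse (of_int (lead_coeff g))) (rpoly g)"
    by (metis of_rat_poly_hom.map_poly_gcd rpoly_of_rat_of_int of_rat_hom.map_poly_hom_smult
        of_rat_inverse of_rat_of_int_eq)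
  moreover have "rpoly (pderiv p) = pderiv (rpoly p)"
    by (simp add: rpoly_def of_int_hom.map_poly_pderiv)
  ultimately have "gcdp (rpoly p) = rpoly (Polynomial.smult (lead_coeff g) g)"
    using lc by (auto simp: gcdp_def rpoly_def of_int_hom.map_poly_hom_smult)
  then show ?thesis
    by (rule that)
qed

lemma rpoly_div_monic:
  fixes g q :: "int poly"
  assumes g: "lead_coeff g = 1" and dvd: "rpoly g dvd rpoly q"
  obtains h where "rpoly h = rpoly q div rpoly g"
proof -
  obtain s t where st: "pseudo_divmod q g = (s, t)"
    by force
  have "g \<noteq> 0"
    using g by auto
  from pseudo_divmod[OF this st] g
  have qst: "q = g * s + t" and t: "t = 0 \<or> degree t < degree g"
    by auto
  define f where "f = rpoly q div rpoly g"
  have "rpoly g \<noteq> 0"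
    using \<open>g \<noteq> 0\<close> by (simp add: rpoly_def)
  have "rpoly q = rpoly g * f"
    using dvd by (simp add: f_def)
  moreover have "rpoly q = rpoly g * rpoly s + rpoly t"
    unfolding qst rpoly_def by (simp add: of_int_poly_hom.hom_mult of_int_poly_hom.hom_add)
  ultimately have E: "rpoly g * (f - rpoly s) = rpoly t"
    by (simp add: algebra_simps)
  have "f = rpoly s"
  proof (rule ccontr)
    assume ne: "f \<noteq> rpoly s"
    then have "t \<noteq> 0"
      using E \<open>rpoly g \<noteq> 0\<close> by (auto simp: rpoly_def)
    then have "degree (rpoly t) < degree (rpoly g)"
      using t by (simp add: rpoly_def of_int_hom.degree_map_poly_hom)
    moreover have "degree (rpoly g * (f - rpoly s)) \<ge> degree (rpoly g)"
      using ne \<open>rpoly g \<noteq> 0\<close> by (simp add: degree_mult_eq)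
    ultimately show False
      using E by simp
  qed
  then show ?thesis
    using that by (simp add: f_def)
qed

lemma rpoly_div_gcdp:
  fixes p q :: "int poly"
  assumes p: "lead_coeff p = 1" and dvd: "gcdp (rpoly p) dvd rpoly q"
  obtains h where "rpoly h = rpoly q div gcdp (rpoly p)"
proof -
  obtain g where g: "gcdp (rpoly p) = rpoly g"
    using gcdp_rpoly_monic[OF p] .
  have "rpoly p \<noteq> 0"
    using p by (auto simp: rpoly_def)
  then have "of_int (lead_coeff g) = (1 :: real)"
    using g by (metis gcdp_def poly_gcd_monic rpoly_def of_int_hom.hom_lead_coeff)
  then show ?thesis
    using rpoly_div_monic[of g q] dvd g that by auto
qed

lemma seidel_trace_monic:
  assumes "seidel_trace n p"
  shows "lead_coeff p = 1" "real_rooted (rpoly p)" "lead_coeff (rpoly p) = 1"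
    and "degree (rpoly p) = n"
  using assms
  by (auto simp: seidel_trace_def rpoly_def of_int_hom.degree_map_poly_hom of_int_hom.hom_lead_coeff)

lemma length_coeff_vec: "h \<noteq> 0 \<Longrightarrow> length (coeff_vec h) = Suc (degree h)"
  by (simp add: coeff_vec_def length_coeffs_degree)

lemma nth_coeff_vec:
  "h \<noteq> 0 \<Longrightarrow> i \<le> degree h \<Longrightarrow> coeff_vec h ! i = Polynomial.coeff h (degree h - i)"
  by (simp add: coeff_vec_def rev_nth length_coeffs_degree nth_coeffs_coeff)

lemma shift1_eq_0_iff [simp]: "shift1 h = 0 \<longleftrightarrow> h = 0"
  by (simp add: shift1_def pcompose_eq_0_iff)

lemma degree_shift1 [simp]: "degree (shift1 h) = degree h"
  by (simp add: shift1_def degree_pcompose)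

lemma shift1_sum_smult:
  "shift1 (\<Sum>j\<in>I. Polynomial.smult (c j) (M j))
    = (\<Sum>j\<in>I. Polynomial.smult (c j) (shift1 (M j)))"
  by (simp add: shift1_def pcompose_sum pcompose_smult)

lemma coeff_vec_sum_smult:
  assumes M: "\<And>j. j \<in> I \<Longrightarrow> M j \<noteq> 0 \<and> degree (M j) = degree h" and "h \<noteq> 0"
    and h: "h = (\<Sum>j\<in>I. Polynomial.smult (c j) (M j))"
  shows "\<forall>j\<in>I. length (coeff_vec (M j)) = length (coeff_vec h)"
    and "\<forall>i<length (coeff_vec h). coeff_vec h ! i = (\<Sum>j\<in>I. c j * coeff_vec (M j) ! i)"
proof -
  show "\<forall>j\<in>I. length (coeff_vec (M j)) = length (coeff_vec h)"
    using M \<open>h \<noteq> 0\<close> by (simp add: length_coeff_vec)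
  show "\<forall>i<length (coeff_vec h). coeff_vec h ! i = (\<Sum>j\<in>I. c j * coeff_vec (M j) ! i)"
  proof (intro allI impI)
    fix i
    assume "i < length (coeff_vec h)"
    then have i: "i \<le> degree h"
      using \<open>h \<noteq> 0\<close> by (simp add: length_coeff_vec)
    have "Polynomial.coeff h k = (\<Sum>j\<in>I. c j * Polynomial.coeff (M j) k)" for k
      using h by (simp add: coeff_sum)
    then have "coeff_vec h ! i = (\<Sum>j\<in>I. c j * Polynomial.coeff (M j) (degree h - i))"
      using nth_coeff_vec[OF \<open>h \<noteq> 0\<close> i] by simp
    also have "\<dots> = (\<Sum>j\<in>I. c j * coeff_vec (M j) ! i)"
      using M i by (intro sum.cong) (simp_all add: nth_coeff_vec)
    finally show "coeff_vec h ! i = (\<Sum>j\<in>I. c j * coeff_vec (M j) ! i)" .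
  qed
qed

theorem theorem4p4:
  fixes n :: nat and p q :: "int poly"
  assumes "n \<ge> 2"
    and "seidel_trace n p"
    and "q \<in> J_set n p"
  shows "(\<exists>g :: int poly. rpoly g = rpoly q div gcdp (rpoly p)) \<and>
    (let r = degree (Minp (rpoly p)); F = coeff_vec (shift1 (rpoly q div gcdp (rpoly p))) in
      1 \<le> r \<and> r \<le> n \<and>
      (\<exists>\<gamma> :: nat \<Rightarrow> real. (\<forall>j\<in>{1..r}. \<gamma> j \<ge> 0) \<and>
         (\<forall>j\<in>{1..r}. length (coeff_vec (shift1 (Minj (rpoly p) j))) = length F) \<and>
         (\<forall>i < length F. F ! i =
            (\<Sum>j = 1..r. \<gamma> j * coeff_vec (shift1 (Minj (rpoly p) j)) ! i))))"
proof -
  define P Q where "P = rpoly p" and "Q = rpoly q"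
  note p = seidel_trace_monic[OF assms(2), folded P_def]
  have q: "real_rooted Q" "lead_coeff Q = 1" and "interlaces Q P"
    using assms(3) seidel_trace_monic[of "n - 1" q] by (auto simp: J_set_def P_def Q_def)
  obtain A B where A: "P = poly_of_roots A" and B: "Q = poly_of_roots B"
    using p(2,3) q by (metis monic_real_rooted_poly_of_roots)
  with \<open>interlaces Q P\<close> have il: "interlacing B A"
    by (simp add: interlaces_imp_interlacing)
  define r f where "r = card (set_mset A)" and "f = Q div gcdp P"
  have r: "degree (Minp P) = r" "1 \<le> r" "r \<le> n"
    using interlacing_div_gcdp[OF il] p(4) by (simp_all add: A Minp_poly_of_roots r_def)
  have "gcdp P dvd Q"
    using interlacing_repeated_roots_subset[OF il]
    by (simp add: A B gcdp_poly_of_roots poly_of_roots_dvd)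
  with p(1) obtain h where h: "rpoly h = f"
    by (auto simp: P_def Q_def f_def elim: rpoly_div_gcdp)
  obtain \<gamma> where \<gamma>: "\<forall>j\<in>{1..r}. 0 \<le> \<gamma> j"
    and "f = (\<Sum>j=1..r. Polynomial.smult (\<gamma> j) (Minj P j))"
    using interlacing_Minj_expansion[OF il] by (auto simp: f_def A B r_def)
  then have "shift1 f = (\<Sum>j=1..r. Polynomial.smult (\<gamma> j) (shift1 (Minj P j)))"
    by (simp add: shift1_sum_smult)
  moreover have f: "shift1 f \<noteq> 0" "degree (shift1 f) = r - 1"
    using interlacing_div_gcdp[OF il] by (simp_all add: f_def A B r_def)
  moreover have "shift1 (Minj P j) \<noteq> 0 \<and> degree (shift1 (Minj P j)) = degree (shift1 f)"
    if "j \<in> {1..r}" for j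
    using that f Minj_nonzero[of j P] degree_Minj[of j P]
    by (simp add: A Min_roots_poly_of_roots r_def)
  ultimately show ?thesis
    using h \<gamma> r coeff_vec_sum_smult[of "{1..r}" "\<lambda>j. shift1 (Minj P j)" "shift1 f" \<gamma>]
    unfolding Let_def P_def[symmetric] Q_def[symmetric] f_def[symmetric] by auto
qed

end
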